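(* Let $G$ be a connected graph on $n\ge2$ vertices with transmissions $\mathbb{D}_1\ge\mathbb{D}_2\ge\cdots\ge\mathbb{D}_n$ and diameter $d$. Then for $1\le i\le n$, \[\rho(\mathbb{D}(G))\le \frac{\mathbb{D}_i-d+\sqrt{(\mathbb{D}_i+d)^2+4d\sum_{k=1}^{i-1}(\mathbb{D}_k-\mathbb{D}_i)}}{2},\] with equality if and only if $\mathbb{D}_1=\mathbb{D}_2=\cdots=\mathbb{D}_n$.
   Context: $\mathbb{D}(G)=(d_{ij})$ is the distance matrix of $G$; the transmission of $v_i$ is $\mathbb{D}_i=\sum_j d_{ij}$; $\rho$ is the spectral radius. An empty sum equals $0$. *)

theory Defs
  imports "Jordan_Normal_Form.Spectral_Radius"
begin

definition simple_graph :: "nat \<Rightarrow> (nat \<Rightarrow> nat \<Rightarrow> bool) \<Rightarrow> bool" where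
  "simple_graph n E \<longleftrightarrow> (\<forall>u v. E u v \<longrightarrow> E v u) \<and> (\<forall>u. \<not> E u u)
      \<and> (\<forall>u v. E u v \<longrightarrow> u < n \<and> v < n)"

definition is_walk :: "nat \<Rightarrow> (nat \<Rightarrow> nat \<Rightarrow> bool) \<Rightarrow> nat list \<Rightarrow> bool" where
  "is_walk n E xs \<longleftrightarrow> xs \<noteq> [] \<and> set xs \<subseteq> {..<n}
      \<and> (\<forall>k. Suc k < length xs \<longrightarrow> E (xs ! k) (xs ! Suc k))"

definition graph_connected :: "nat \<Rightarrow> (nat \<Rightarrow> nat \<Rightarrow> bool) \<Rightarrow> bool" where
  "graph_connected n E \<longleftrightarrow>
     (\<forall>u<n. \<forall>v<n. \<exists>xs. is_walk n E xs \<and> hd xs = u \<and> last xs = v)"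

definition gdist :: "nat \<Rightarrow> (nat \<Rightarrow> nat \<Rightarrow> bool) \<Rightarrow> nat \<Rightarrow> nat \<Rightarrow> nat" where
  "gdist n E u v = (LEAST k. \<exists>xs. is_walk n E xs \<and> hd xs = u \<and> last xs = v
                                  \<and> length xs = Suc k)"

definition diameter :: "nat \<Rightarrow> (nat \<Rightarrow> nat \<Rightarrow> bool) \<Rightarrow> nat" where
  "diameter n E = Max {gdist n E u v | u v. u < n \<and> v < n}"

definition distance_matrix :: "nat \<Rightarrow> (nat \<Rightarrow> nat \<Rightarrow> bool) \<Rightarrow> complex mat" where
  "distance_matrix n E = mat n n (\<lambda>(i, j). of_nat (gdist n E i j))"

definition transmission :: "nat \<Rightarrow> (nat \<Rightarrow> nat \<Rightarrow> bool) \<Rightarrow> nat \<Rightarrow> nat" where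
  "transmission n E i = (\<Sum>j<n. gdist n E i j)"

end

theory Submission
  imports Defs
begin

text \<open>Let \<open>z = |v|\<close> for an eigenvector \<open>v\<close> of an eigenvalue of maximal modulus \<open>\<mu> = \<rho>\<close>, and let
  \<open>T = \<Sum>z\<close>, \<open>M = max z\<close>, \<open>S = \<Sum>\<^sub>k\<^sub><\<^sub>i (D\<^sub>k - D\<^sub>i)\<close>. Row \<open>p\<close> of \<open>\<mu> z\<^sub>p \<le> \<Sum>\<^sub>q d\<^sub>p\<^sub>q z\<^sub>q\<close> gives
  \<open>(\<mu> + d) z\<^sub>p \<le> d T\<close>, so \<open>(\<mu> + d) M \<le> d T\<close>; summing all rows and using symmetry gives
  \<open>\<mu> T \<le> \<Sum> D\<^sub>q z\<^sub>q \<le> D\<^sub>i T + S M\<close>. Multiplying the two yields \<open>(\<mu> - D\<^sub>i)(\<mu> + d) \<le> d S\<close>, and the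
  bound is the larger root of this quadratic. At equality every inequality is tight: \<open>z\<close> is a
  positive eigenvector, \<open>D\<^sub>q = D\<^sub>i\<close> for \<open>q \<ge> i\<close>, and a vertex \<open>k < i\<close> with \<open>D\<^sub>k > D\<^sub>i\<close> would satisfy
  \<open>z\<^sub>k = M\<close> and hence be at distance \<open>d\<close> from every other vertex; having a neighbour, this forces
  \<open>d = 1\<close> and \<open>D\<^sub>k = n - 1 \<le> D\<^sub>i\<close>.\<close>

lemma is_walk_rev:
  assumes "simple_graph n E" and "is_walk n E xs"
  shows "is_walk n E (rev xs)"
  unfolding is_walk_def
proof (intro conjI allI impI)
  show "rev xs \<noteq> []" "set (rev xs) \<subseteq> {..<n}" using assms(2) by (auto simp: is_walk_def)
  fix k assume k: "Suc k < length (rev xs)"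
  define m where "m = length xs - Suc (Suc k)"
  have m: "Suc m < length xs" "rev xs ! k = xs ! Suc m" "rev xs ! Suc k = xs ! m"
    using k by (auto simp: m_def rev_nth Suc_diff_Suc)
  have "E (xs ! m) (xs ! Suc m)" using assms(2) m(1) by (simp add: is_walk_def)
  then show "E (rev xs ! k) (rev xs ! Suc k)"
    using assms(1) m by (simp add: simple_graph_def)
qed

lemma gdist_le_walk_length:
  assumes "is_walk n E xs" "hd xs = u" "last xs = v"
  shows "gdist n E u v \<le> length xs - 1"
proof -
  have "length xs = Suc (length xs - 1)" using assms(1) by (simp add: is_walk_def)
  then show ?thesis unfolding gdist_def using assms by (intro Least_le) blast
qed

lemma shortest_walk_exists:
  assumes "graph_connected n E" "u < n" "v < n"
  obtains xs where "is_walk n E xs" "hd xs = u" "last xs = v" "length xs = Suc (gdist n E u v)"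
proof -
  obtain xs where xs: "is_walk n E xs" "hd xs = u" "last xs = v"
    using assms unfolding graph_connected_def by blast
  then have "length xs = Suc (length xs - 1)" by (simp add: is_walk_def)
  with xs have "\<exists>k xs. is_walk n E xs \<and> hd xs = u \<and> last xs = v \<and> length xs = Suc k"
    by blast
  from LeastI_ex[OF this] show ?thesis using that unfolding gdist_def by blast
qed

lemma gdist_self: "u < n \<Longrightarrow> gdist n E u u = 0"
  using gdist_le_walk_length[of n E "[u]"] by (simp add: is_walk_def)

lemma one_le_gdist:
  assumes "graph_connected n E" "u < n" "v < n" "u \<noteq> v"
  shows "1 \<le> gdist n E u v"
proof (rule ccontr)
  assume "\<not> 1 \<le> gdist n E u v"
  moreover obtain xs where "is_walk n E xs" "hd xs = u" "last xs = v"
      "length xs = Suc (gdist n E u v)"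
    using shortest_walk_exists[OF assms(1-3)] .
  ultimately show False using assms(4) by (cases xs) (auto split: if_splits simp: Suc_le_eq)
qed

lemma gdist_sym:
  assumes "simple_graph n E" "graph_connected n E" "u < n" "v < n"
  shows "gdist n E u v = gdist n E v u"
proof -
  have le: "gdist n E x y \<le> gdist n E y x" if xy: "x < n" "y < n" for x y
  proof -
    obtain xs where xs: "is_walk n E xs" "hd xs = y" "last xs = x"
        "length xs = Suc (gdist n E y x)"
      using shortest_walk_exists[OF assms(2) xy(2,1)] .
    have "xs \<noteq> []" using xs(1) by (simp add: is_walk_def)
    then have "gdist n E x y \<le> length (rev xs) - 1"
      using xs by (intro gdist_le_walk_length is_walk_rev assms(1)) (auto simp: hd_rev last_rev)
    then show ?thesis using xs(4) by simp
  qed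
  show ?thesis using le[of u v] le[of v u] assms(3,4) by simp
qed

lemma gdist_le_diameter:
  assumes "u < n" "v < n"
  shows "gdist n E u v \<le> diameter n E"
proof -
  have "finite {gdist n E u v | u v. u < n \<and> v < n}"
    by (rule finite_image_set2) auto
  then show ?thesis unfolding diameter_def using assms by (intro Max_ge) auto
qed

lemma ex_gdist_le_one:
  assumes "simple_graph n E" "graph_connected n E" "2 \<le> n" "u < n"
  shows "\<exists>w<n. w \<noteq> u \<and> gdist n E u w \<le> 1"
proof -
  define v where "v = (if u = 0 then 1 else 0::nat)"
  have v: "v < n" "v \<noteq> u" using assms(3) by (auto simp: v_def)
  obtain xs where xs: "is_walk n E xs" "hd xs = u" "last xs = v"
    using assms(2,4) v(1) unfolding graph_connected_def by blast
  have "Suc 0 < length xs"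
    using xs v(2) by (cases xs) (auto simp: is_walk_def)
  then have uw: "E u (xs ! 1)"
    using xs by (cases xs) (auto simp: is_walk_def)
  then have "xs ! 1 < n" "xs ! 1 \<noteq> u" using assms(1) by (auto simp: simple_graph_def)
  moreover have "is_walk n E [u, xs ! 1]"
    using uw \<open>xs ! 1 < n\<close> assms(4) by (auto simp: is_walk_def less_Suc_eq)
  ultimately show ?thesis using gdist_le_walk_length[of n E "[u, xs ! 1]"] by force
qed

lemma eigenvector_entry_modulus_le:
  fixes A :: "complex mat"
  assumes "A \<in> carrier_mat n n" "v \<in> carrier_vec n" "A *\<^sub>v v = lam \<cdot>\<^sub>v v" "p < n"
  shows "cmod lam * cmod (v $ p) \<le> (\<Sum>q<n. cmod (A $$ (p, q)) * cmod (v $ q))"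
proof -
  have "lam * v $ p = (A *\<^sub>v v) $ p" using assms by simp
  also have "\<dots> = (\<Sum>q<n. A $$ (p, q) * v $ q)"
    using assms(1,2,4) by (auto simp: scalar_prod_def atLeast0LessThan intro!: sum.cong)
  finally have "cmod lam * cmod (v $ p) = cmod (\<Sum>q<n. A $$ (p, q) * v $ q)"
    by (metis norm_mult)
  also have "\<dots> \<le> (\<Sum>q<n. cmod (A $$ (p, q)) * cmod (v $ q))"
    by (rule order.trans[OF norm_sum]) (simp add: norm_mult)
  finally show ?thesis .
qed

lemma eigenvalue_if_row_sums_eq:
  fixes A :: "'a :: comm_ring_1 mat"
  assumes "A \<in> carrier_mat n n" "0 < n" "\<And>p. p < n \<Longrightarrow> (\<Sum>q<n. A $$ (p, q)) = c"
  shows "eigenvalue A c"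
proof -
  define ones where "ones = (vec n (\<lambda>_. 1) :: 'a vec)"
  have "ones \<noteq> 0\<^sub>v n"
    using assms(2) by (auto simp: ones_def dest!: arg_cong[of _ _ "\<lambda>v. v $ 0"])
  moreover have "A *\<^sub>v ones = c \<cdot>\<^sub>v ones"
    using assms by (auto simp: ones_def scalar_prod_def atLeast0LessThan intro!: eq_vecI)
  ultimately show ?thesis
    using assms(1) unfolding eigenvalue_def eigenvector_def
    by (intro exI[of _ ones]) (simp add: ones_def)
qed

lemma larger_root:
  fixes b d s :: real
  assumes "0 \<le> d * s"
  defines "r \<equiv> (b - d + sqrt ((b + d)\<^sup>2 + 4 * d * s)) / 2"
  shows "b \<le> r" and "- d \<le> r" and "(r - b) * (r + d) = d * s"
proof -
  define w where "w = sqrt ((b + d)\<^sup>2 + 4 * d * s)"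
  have "0 \<le> (b + d)\<^sup>2 + 4 * d * s" using assms(1) by simp
  then have w2: "w\<^sup>2 = (b + d)\<^sup>2 + 4 * d * s" unfolding w_def by (rule real_sqrt_pow2)
  have "\<bar>b + d\<bar> \<le> w" unfolding w_def using assms(1) by (intro real_le_rsqrt) simp
  then show "b \<le> r" "- d \<le> r" by (auto simp: r_def w_def)
  have "(r - b) * (r + d) = (w\<^sup>2 - (b + d)\<^sup>2) / 4"
    unfolding r_def w_def[symmetric] by (simp add: power2_eq_square field_simps)
  then show "(r - b) * (r + d) = d * s" using w2 by simp
qed

lemma le_larger_root:
  fixes b d s x :: real
  assumes "0 \<le> d * s" "- d \<le> x" "(x - b) * (x + d) \<le> d * s"
  shows "x \<le> (b - d + sqrt ((b + d)\<^sup>2 + 4 * d * s)) / 2" (is "x \<le> ?r")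
proof (rule ccontr)
  assume "\<not> x \<le> ?r"
  note r = larger_root[OF assms(1), of b]
  have "d * s \<le> (?r - b) * (x + d)"
    using r \<open>\<not> x \<le> ?r\<close> by (simp add: mult_left_mono flip: r(3))
  also have "\<dots> < (x - b) * (x + d)"
    using r \<open>\<not> x \<le> ?r\<close> by (intro mult_strict_right_mono) auto
  finally show False using assms(3) by simp
qed

locale distance_like_matrix =
  fixes n :: nat and a :: "nat \<Rightarrow> nat \<Rightarrow> real" and d :: real and D :: "nat \<Rightarrow> real"
  assumes zero_diag: "p < n \<Longrightarrow> a p p = 0"
    and symmetric: "p < n \<Longrightarrow> q < n \<Longrightarrow> a p q = a q p"
    and one_le_entry: "p < n \<Longrightarrow> q < n \<Longrightarrow> p \<noteq> q \<Longrightarrow> 1 \<le> a p q"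
    and entry_le_diam: "p < n \<Longrightarrow> q < n \<Longrightarrow> a p q \<le> d"
    and ex_neighbour: "p < n \<Longrightarrow> \<exists>q<n. q \<noteq> p \<and> a p q \<le> 1"
    and row_sum: "p < n \<Longrightarrow> D p = (\<Sum>q<n. a p q)"
    and row_sum_antimono: "p \<le> q \<Longrightarrow> q < n \<Longrightarrow> D q \<le> D p"
begin

definition excess :: "nat \<Rightarrow> real" where
  "excess i = (\<Sum>k<i. D k - D i)"

definition radius_bound :: "nat \<Rightarrow> real" where
  "radius_bound i = (D i - d + sqrt ((D i + d)\<^sup>2 + 4 * d * excess i)) / 2"

definition matrix :: "complex mat" where
  "matrix = mat n n (\<lambda>(p, q). complex_of_real (a p q))"

lemma entry_nonneg: "p < n \<Longrightarrow> q < n \<Longrightarrow> 0 \<le> a p q"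
  using zero_diag one_le_entry by (cases "p = q") (auto intro: order.trans[OF zero_le_one])

lemma one_le_diam:
  assumes "0 < n"
  shows "1 \<le> d"
proof -
  obtain q where "q < n" "q \<noteq> 0" using ex_neighbour[OF assms] by blast
  then show ?thesis using assms one_le_entry[of 0 q] entry_le_diam[of 0 q] by linarith
qed

lemma row_sum_nonneg: "p < n \<Longrightarrow> 0 \<le> D p"
  by (auto simp: row_sum intro!: sum_nonneg entry_nonneg)

lemma excess_nonneg: "i < n \<Longrightarrow> 0 \<le> excess i"
  unfolding excess_def using row_sum_antimono by (intro sum_nonneg) auto

lemma row_sum_off_diag: "p < n \<Longrightarrow> D p = (\<Sum>q\<in>{..<n} - {p}. a p q)"
  by (simp add: row_sum zero_diag sum.remove)

lemma weighted_row_le: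
  assumes "\<And>q. q < n \<Longrightarrow> 0 \<le> z q" "p < n"
  shows "(\<Sum>q<n. a p q * z q) \<le> d * ((\<Sum>q<n. z q) - z p)"
proof -
  have "(\<Sum>q<n. a p q * z q) = (\<Sum>q\<in>{..<n} - {p}. a p q * z q)"
    using assms(2) by (simp add: zero_diag sum.remove)
  also have "\<dots> \<le> (\<Sum>q\<in>{..<n} - {p}. d * z q)"
    using assms by (intro sum_mono mult_right_mono entry_le_diam) auto
  also have "\<dots> = d * ((\<Sum>q<n. z q) - z p)"
    using assms(2) by (simp add: sum_distrib_left[symmetric] sum_diff1)
  finally show ?thesis .
qed

lemma sum_weighted_rows: "(\<Sum>p<n. \<Sum>q<n. a p q * z q) = (\<Sum>q<n. D q * z q)"
proof -
  have "(\<Sum>p<n. \<Sum>q<n. a p q * z q) = (\<Sum>q<n. (\<Sum>p<n. a q p) * z q)"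
    by (subst sum.swap) (simp add: sum_distrib_right symmetric)
  then show ?thesis by (simp add: row_sum)
qed

text \<open>A vertex at distance \<open>d\<close> from all others has a neighbour, so \<open>d = 1\<close>.\<close>
lemma row_sum_le_if_row_at_diam:
  assumes "k < n" "\<And>q. q < n \<Longrightarrow> q \<noteq> k \<Longrightarrow> a k q = d" "p < n"
  shows "D k \<le> D p"
proof -
  obtain q where "q < n" "q \<noteq> k" "a k q \<le> 1" using ex_neighbour[OF assms(1)] by blast
  then have "d = 1" using assms(1) assms(2)[of q] one_le_diam by force
  then have "D k = (\<Sum>q\<in>{..<n} - {k}. 1)"
    using assms(1,2) by (simp add: row_sum_off_diag)
  also have "\<dots> = (\<Sum>q\<in>{..<n} - {p}. 1)" using assms(1,3) by simp
  also have "\<dots> \<le> D p"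
    unfolding row_sum_off_diag[OF assms(3)] using assms(3) one_le_entry by (intro sum_mono) auto
  finally show ?thesis .
qed

lemma radius_bound_eq_if_row_sums_eq:
  assumes "\<forall>k<n. D k = D 0" "i < n"
  shows "radius_bound i = D i"
proof -
  have "D k - D i = 0" if "k < i" for k
    using assms(1) that assms(2) by (metis diff_self order.strict_trans)
  then have "excess i = 0" unfolding excess_def by (intro sum.neutral) auto
  moreover have "0 \<le> D i + d"
    using one_le_diam row_sum_nonneg[of i] assms(2) by linarith
  ultimately show ?thesis by (simp add: radius_bound_def)
qed

end

locale subeigenvector = distance_like_matrix +
  fixes z :: "nat \<Rightarrow> real" and mu :: real
  assumes z_nonneg: "p < n \<Longrightarrow> 0 \<le> z p"
    and z_nonzero: "\<exists>p<n. z p \<noteq> 0"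
    and mu_nonneg: "0 \<le> mu"
    and sub_eigen: "p < n \<Longrightarrow> mu * z p \<le> (\<Sum>q<n. a p q * z q)"
begin

definition total :: real where
  "total = (\<Sum>p<n. z p)"

definition peak :: real where
  "peak = Max (z ` {..<n})"

text \<open>The slack of the estimate \<open>(D\<^sub>q - D\<^sub>i) z\<^sub>q \<le> (D\<^sub>q - D\<^sub>i) [q < i] peak\<close>.\<close>
definition slack :: "nat \<Rightarrow> nat \<Rightarrow> real" where
  "slack i q = (if q < i then (D q - D i) * (peak - z q) else (D i - D q) * z q)"

lemma n_pos: "0 < n"
  using z_nonzero by auto

lemma le_peak: "p < n \<Longrightarrow> z p \<le> peak"
  by (simp add: peak_def)

lemma peak_attained: obtains u where "u < n" "z u = peak"
  using Max_in[of "z ` {..<n}"] n_pos unfolding peak_def by fastforce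

lemma peak_pos: "0 < peak"
  using z_nonzero z_nonneg le_peak by (metis order_le_less order.strict_trans2)

lemma peak_le_total: "peak \<le> total"
proof -
  obtain u where "u < n" "z u = peak" by (rule peak_attained)
  then have "z u \<le> (\<Sum>p<n. z p)" using z_nonneg by (intro member_le_sum) auto
  then show ?thesis using \<open>z u = peak\<close> by (simp add: total_def)
qed

lemma peak_bound: "(mu + d) * peak \<le> d * total"
proof -
  obtain u where u: "u < n" "z u = peak" by (rule peak_attained)
  have "mu * peak \<le> d * (total - peak)"
    using sub_eigen[OF u(1)] weighted_row_le[of z, OF z_nonneg u(1)] u by (simp add: total_def)
  then show ?thesis by (simp add: algebra_simps)
qed

lemma total_bound: "mu * total \<le> (\<Sum>q<n. D q * z q)"
proof -
  have "mu * total = (\<Sum>p<n. mu * z p)" by (simp add: total_def sum_distrib_left)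
  also have "\<dots> \<le> (\<Sum>p<n. \<Sum>q<n. a p q * z q)" by (intro sum_mono sub_eigen) simp
  finally show ?thesis by (simp only: sum_weighted_rows)
qed

lemma slack_nonneg:
  assumes "i < n" "q < n"
  shows "0 \<le> slack i q"
  using assms row_sum_antimono[of q i] row_sum_antimono[of i q] le_peak[of q] z_nonneg[of q]
  by (auto simp: slack_def)

lemma weighted_row_sums_eq:
  assumes "i \<le> n"
  shows "(\<Sum>q<n. D q * z q) + (\<Sum>q<n. slack i q) = D i * total + excess i * peak"
proof -
  have "{q \<in> {..<n}. q < i} = {..<i}" using assms by auto
  then have excess_peak: "(\<Sum>q<n. if q < i then (D q - D i) * peak else 0) = excess i * peak"
    unfolding excess_def sum_distrib_right by (metis finite_lessThan sum.inter_filter)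
  have "(\<Sum>q<n. D q * z q) + (\<Sum>q<n. slack i q) = (\<Sum>q<n. D q * z q + slack i q)"
    by (simp add: sum.distrib)
  also have "\<dots> = (\<Sum>q<n. D i * z q + (if q < i then (D q - D i) * peak else 0))"
    by (intro sum.cong) (auto simp: slack_def algebra_simps)
  also have "\<dots> = D i * total + excess i * peak"
    by (simp only: sum.distrib excess_peak total_def sum_distrib_left)
  finally show ?thesis .
qed

lemma excess_peak_bound:
  assumes "i < n"
  shows "(mu - D i) * total \<le> excess i * peak"
proof -
  have "0 \<le> (\<Sum>q<n. slack i q)" using slack_nonneg[OF assms] by (intro sum_nonneg) simp
  then show ?thesis
    using total_bound weighted_row_sums_eq[of i] assms by (simp add: left_diff_distrib)
qed

lemma quadratic_bound:
  assumes "i < n"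
  shows "(mu - D i) * (mu + d) \<le> d * excess i"
proof (cases "mu \<le> D i")
  case True
  have "(mu - D i) * (mu + d) \<le> 0"
    using True mu_nonneg one_le_diam[OF n_pos] by (intro mult_nonpos_nonneg) auto
  also have "0 \<le> d * excess i"
    using one_le_diam[OF n_pos] excess_nonneg[OF assms] by simp
  finally show ?thesis .
next
  case False
  have "(mu - D i) * (mu + d) * (total * peak) = ((mu - D i) * total) * ((mu + d) * peak)"
    by (simp add: algebra_simps)
  also have "\<dots> \<le> (excess i * peak) * (d * total)"
    using False excess_peak_bound[OF assms] peak_bound peak_pos peak_le_total mu_nonneg
      excess_nonneg[OF assms]
      one_le_diam[OF n_pos] by (intro mult_mono[of _ _ "(mu + d) * peak"]) auto
  also have "\<dots> = d * excess i * (total * peak)" by (simp add: algebra_simps)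
  finally show ?thesis using peak_pos peak_le_total by simp
qed

lemma le_radius_bound: "i < n \<Longrightarrow> mu \<le> radius_bound i"
  unfolding radius_bound_def
  using quadratic_bound one_le_diam[OF n_pos] excess_nonneg mu_nonneg
  by (intro le_larger_root) auto

lemma tight_if_eq_radius_bound:
  assumes "i < n" "mu = radius_bound i"
  shows "D i \<le> mu" and "(mu - D i) * (mu + d) = d * excess i"
    and "(mu - D i) * total = excess i * peak"
proof -
  have d: "1 \<le> d" by (rule one_le_diam[OF n_pos])
  then have "0 \<le> d * excess i" using excess_nonneg[OF assms(1)] by simp
  moreover have mu: "mu = (D i - d + sqrt ((D i + d)\<^sup>2 + 4 * d * excess i)) / 2"
    using assms(2) by (simp add: radius_bound_def)
  ultimately show Di: "D i \<le> mu" and root: "(mu - D i) * (mu + d) = d * excess i"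
    using larger_root(1,3)[of d "excess i" "D i", folded mu] by simp_all
  have "d * (excess i * peak) = (mu - D i) * ((mu + d) * peak)"
    by (simp add: root[symmetric])
  also have "\<dots> \<le> (mu - D i) * (d * total)"
    using Di peak_bound by (intro mult_left_mono) auto
  finally have "excess i * peak \<le> (mu - D i) * total" using d by simp
  with excess_peak_bound[OF assms(1)]
  show "(mu - D i) * total = excess i * peak" by simp
qed

lemma weighted_sum_eq_if_eq_radius_bound:
  assumes "i < n" "mu = radius_bound i"
  shows "(\<Sum>q<n. D q * z q) = mu * total" and "(\<Sum>q<n. slack i q) = 0"
proof -
  have "(\<Sum>q<n. D q * z q) + (\<Sum>q<n. slack i q) = mu * total"
    using weighted_row_sums_eq[of i] tight_if_eq_radius_bound(3)[OF assms] assms(1)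
    by (simp add: left_diff_distrib)
  moreover have "0 \<le> (\<Sum>q<n. slack i q)" using slack_nonneg[OF assms(1)] by (intro sum_nonneg) simp
  ultimately show "(\<Sum>q<n. D q * z q) = mu * total" "(\<Sum>q<n. slack i q) = 0"
    using total_bound by linarith+
qed

lemma slack_eq_0_if_eq_radius_bound:
  assumes "i < n" "mu = radius_bound i" "q < n"
  shows "slack i q = 0"
  using weighted_sum_eq_if_eq_radius_bound(2)[OF assms(1,2)] slack_nonneg[OF assms(1)] assms(3)
    sum_nonneg_eq_0_iff[of "{..<n}" "slack i"]
  by simp

lemma eigen_eq_if_eq_radius_bound:
  assumes "i < n" "mu = radius_bound i" "p < n"
  shows "(\<Sum>q<n. a p q * z q) = mu * z p"
proof -
  have "(\<Sum>p<n. mu * z p) = (\<Sum>p<n. \<Sum>q<n. a p q * z q)"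
    using weighted_sum_eq_if_eq_radius_bound(1)[OF assms(1,2)]
    by (simp add: sum_weighted_rows total_def sum_distrib_left)
  from sum_mono_inv[OF this sub_eigen] assms(3) show ?thesis by simp
qed

text \<open>All off-diagonal entries are at least \<open>1\<close>, so a zero entry of an eigenvector \<open>z \<ge> 0\<close>
  forces \<open>z = 0\<close>.\<close>
lemma z_pos_if_eq_radius_bound:
  assumes "i < n" "mu = radius_bound i" "p < n"
  shows "0 < z p"
proof (rule ccontr)
  assume "\<not> 0 < z p"
  then have zp: "z p = 0" using z_nonneg[OF assms(3)] by simp
  obtain u where u: "u < n" "z u = peak" by (rule peak_attained)
  then have "p \<noteq> u" using zp peak_pos by auto
  then have "0 < a p u * z u"
    using u peak_pos assms(3) one_le_entry[of p u] by (intro mult_pos_pos) auto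
  also have "\<dots> \<le> (\<Sum>q<n. a p q * z q)"
    using u(1) assms(3) entry_nonneg z_nonneg by (intro member_le_sum) auto
  also have "\<dots> = 0" using eigen_eq_if_eq_radius_bound[OF assms] zp by simp
  finally show False by simp
qed

lemma peak_bound_eq_if_eq_radius_bound:
  assumes "i < n" "mu = radius_bound i" "D i < mu"
  shows "(mu + d) * peak = d * total"
proof -
  have "(mu - D i) * ((mu + d) * peak) = (mu - D i) * (d * total)"
    using tight_if_eq_radius_bound[OF assms(1,2)] by (metis mult.assoc mult.left_commute)
  then show ?thesis using assms(3) by simp
qed

lemma row_at_diam_if_eq_radius_bound:
  assumes "i < n" "mu = radius_bound i" "D i < mu" "k < n" "z k = peak"
  shows "q < n \<Longrightarrow> q \<noteq> k \<Longrightarrow> a k q = d"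
proof -
  have "(\<Sum>q\<in>{..<n} - {k}. a k q * z q) = (\<Sum>q<n. a k q * z q)"
    using assms(4) by (simp add: zero_diag sum.remove)
  also have "\<dots> = d * (total - z k)"
    using eigen_eq_if_eq_radius_bound[OF assms(1,2,4)] assms(5)
      peak_bound_eq_if_eq_radius_bound[OF assms(1-3)]
    by (simp add: algebra_simps)
  also have "\<dots> = (\<Sum>q\<in>{..<n} - {k}. d * z q)"
    using assms(4) by (simp add: total_def sum_distrib_left[symmetric] sum_diff1)
  finally have "(\<Sum>q\<in>{..<n} - {k}. a k q * z q) = (\<Sum>q\<in>{..<n} - {k}. d * z q)" .
  from sum_mono_inv[OF this]
  have "a k q * z q = d * z q" if "q < n" "q \<noteq> k" for q
    using that assms(4) entry_le_diam z_nonneg by (simp add: mult_right_mono)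
  then show "q < n \<Longrightarrow> q \<noteq> k \<Longrightarrow> a k q = d"
    using z_pos_if_eq_radius_bound[OF assms(1,2)] by force
qed

lemma row_sums_eq_if_eq_radius_bound:
  assumes "i < n" "mu = radius_bound i"
  shows "\<forall>k<n. D k = D 0"
proof -
  have "D k = D i" if k: "k < n" for k
  proof (cases "k < i")
    case True
    show ?thesis
    proof (rule ccontr)
      assume "D k \<noteq> D i"
      then have gt: "D i < D k" using row_sum_antimono[of k i] True assms(1) by simp
      then have "z k = peak"
        using slack_eq_0_if_eq_radius_bound[OF assms k] True by (simp add: slack_def)
      have "D k - D i \<le> excess i"
        unfolding excess_def using True assms(1) row_sum_antimono
        by (intro member_le_sum[where f = "\<lambda>j. D j - D i"]) auto
      then have "0 < d * excess i" using gt one_le_diam[OF n_pos] by simp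
      then have "D i < mu" using tight_if_eq_radius_bound[OF assms] by (cases "mu = D i") auto
      from row_sum_le_if_row_at_diam[OF k row_at_diam_if_eq_radius_bound[OF assms this k \<open>z k = peak\<close>]]
      show False using gt assms(1) by fastforce
    qed
  next
    case False
    then show ?thesis
      using slack_eq_0_if_eq_radius_bound[OF assms k] z_pos_if_eq_radius_bound[OF assms k]
      by (simp add: slack_def)
  qed
  then show ?thesis using n_pos by (metis assms(1))
qed

end

context distance_like_matrix
begin

lemma matrix_carrier: "matrix \<in> carrier_mat n n"
  by (simp add: matrix_def)

lemma subeigenvector_if_eigenvalue:
  assumes "eigenvalue matrix lam"
  obtains z where "subeigenvector n a d D z (cmod lam)"
proof -
  obtain v where v: "v \<in> carrier_vec n" "v \<noteq> 0\<^sub>v n" "matrix *\<^sub>v v = lam \<cdot>\<^sub>v v"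
    using assms unfolding eigenvalue_def eigenvector_def by (auto simp: matrix_def)
  have "\<exists>p<n. cmod (v $ p) \<noteq> 0"
  proof (rule ccontr)
    assume "\<not> (\<exists>p<n. cmod (v $ p) \<noteq> 0)"
    then have "v = 0\<^sub>v n" using v(1) by (intro eq_vecI) auto
    then show False using v(2) by simp
  qed
  moreover have "cmod lam * cmod (v $ p) \<le> (\<Sum>q<n. a p q * cmod (v $ q))" if "p < n" for p
  proof -
    have "cmod (matrix $$ (p, q)) = a p q" if "q < n" for q
      using \<open>p < n\<close> that entry_nonneg by (simp add: matrix_def)
    then show ?thesis
      using eigenvector_entry_modulus_le[OF matrix_carrier v(1,3) that] by simp
  qed
  ultimately have "subeigenvector n a d D (\<lambda>p. cmod (v $ p)) (cmod lam)"
    unfolding subeigenvector_def subeigenvector_axioms_def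
    using distance_like_matrix_axioms by simp
  then show ?thesis by (rule that)
qed

lemma spectral_radius_attained:
  assumes "0 < n"
  obtains lam where "eigenvalue matrix lam" "spectral_radius matrix = cmod lam"
proof -
  obtain lam where "lam \<in> spectrum matrix" "spectral_radius matrix = cmod lam"
    using spectral_radius_mem_max(1)[OF matrix_carrier assms] by blast
  then show ?thesis using that by (simp add: spectrum_def)
qed

lemma spectral_radius_le_radius_bound:
  assumes "i < n"
  shows "spectral_radius matrix \<le> radius_bound i"
proof -
  obtain lam where lam: "eigenvalue matrix lam" "spectral_radius matrix = cmod lam"
    using assms by (auto intro: spectral_radius_attained)
  obtain z where "subeigenvector n a d D z (cmod lam)"
    by (rule subeigenvector_if_eigenvalue[OF lam(1)])
  from subeigenvector.le_radius_bound[OF this assms] show ?thesis using lam(2) by simp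
qed

lemma spectral_radius_eq_radius_bound_iff:
  assumes "i < n"
  shows "spectral_radius matrix = radius_bound i \<longleftrightarrow> (\<forall>k<n. D k = D 0)"
proof
  assume eq: "spectral_radius matrix = radius_bound i"
  obtain lam where lam: "eigenvalue matrix lam" "spectral_radius matrix = cmod lam"
    using assms by (auto intro: spectral_radius_attained)
  obtain z where "subeigenvector n a d D z (cmod lam)"
    by (rule subeigenvector_if_eigenvalue[OF lam(1)])
  moreover have "cmod lam = radius_bound i" using lam(2) eq by simp
  ultimately show "\<forall>k<n. D k = D 0" using subeigenvector.row_sums_eq_if_eq_radius_bound assms by blast
next
  assume regular: "\<forall>k<n. D k = D 0"
  have "(\<Sum>q<n. matrix $$ (p, q)) = complex_of_real (D 0)" if "p < n" for p
  proof -
    have "(\<Sum>q<n. matrix $$ (p, q)) = (\<Sum>q<n. complex_of_real (a p q))"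
      using that by (intro sum.cong) (simp_all add: matrix_def)
    then show ?thesis using regular[rule_format, OF that] row_sum[OF that] by (simp flip: of_real_sum)
  qed
  then have "complex_of_real (D 0) \<in> spectrum matrix"
    using assms unfolding spectrum_def by (intro CollectI eigenvalue_if_row_sums_eq[OF matrix_carrier]) auto
  then have "cmod (complex_of_real (D 0)) \<le> spectral_radius matrix"
    using assms by (intro spectral_radius_mem_max(2)[OF matrix_carrier] imageI) auto
  moreover have "radius_bound i = D 0"
    using radius_bound_eq_if_row_sums_eq[OF regular assms] regular[rule_format, OF assms] by simp
  ultimately show "spectral_radius matrix = radius_bound i"
    using spectral_radius_le_radius_bound[OF assms] row_sum_nonneg[of 0] assms by simp
qed

end

lemma distance_like_matrix_gdist:
  assumes "2 \<le> n" "simple_graph n E" "graph_connected n E"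
    and "\<And>j k. j \<le> k \<Longrightarrow> k < n \<Longrightarrow> transmission n E k \<le> transmission n E j"
  shows "distance_like_matrix n (\<lambda>p q. real (gdist n E p q)) (real (diameter n E))
           (\<lambda>k. real (transmission n E k))"
proof
  show "real (gdist n E p q) = real (gdist n E q p)" if "p < n" "q < n" for p q
    using gdist_sym[OF assms(2,3) that] by simp
  show "1 \<le> real (gdist n E p q)" if "p < n" "q < n" "p \<noteq> q" for p q
    using one_le_gdist[OF assms(3) that] by simp
  show "\<exists>q<n. q \<noteq> p \<and> real (gdist n E p q) \<le> 1" if "p < n" for p
    using ex_gdist_le_one[OF assms(2,3,1) that] by simp
  show "real (transmission n E q) \<le> real (transmission n E p)" if "p \<le> q" "q < n" for p q
    using assms(4)[OF that] by simp
qed (auto simp: gdist_self gdist_le_diameter transmission_def)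

theorem corollary6:
  fixes n :: nat and E :: "nat \<Rightarrow> nat \<Rightarrow> bool" and i :: nat
  assumes "n \<ge> 2"
    and "simple_graph n E"
    and "graph_connected n E"
    and "\<And>j k. j \<le> k \<Longrightarrow> k < n \<Longrightarrow> transmission n E k \<le> transmission n E j"
    and "i < n"
  defines "D \<equiv> (\<lambda>k. real (transmission n E k))"
    and "d \<equiv> real (diameter n E)"
  shows "spectral_radius (distance_matrix n E)
           \<le> (D i - d + sqrt ((D i + d)^2 + 4 * d * (\<Sum>k<i. D k - D i))) / 2
         \<and> (spectral_radius (distance_matrix n E)
           = (D i - d + sqrt ((D i + d)^2 + 4 * d * (\<Sum>k<i. D k - D i))) / 2
         \<longleftrightarrow> (\<forall>k<n. D k = D 0))"
proof -
  interpret distance_like_matrix n "\<lambda>p q. real (gdist n E p q)" d D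
    unfolding D_def d_def using assms(1-4) by (rule distance_like_matrix_gdist)
  have "distance_matrix n E = matrix"
    by (simp add: distance_matrix_def matrix_def)
  then show ?thesis
    using spectral_radius_le_radius_bound[OF assms(5)] spectral_radius_eq_radius_bound_iff[OF assms(5)]
    by (simp add: radius_bound_def excess_def)
qed

end
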